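(* Let $\theta>0$. The following continuous embeddings hold: (a) If $1\le q_1<q_2<\infty$ and $1\le p<\infty$, then $l^{q_1),\frac{q_1}{q_2}\theta}(L^p)\hookrightarrow l^{q_2),\theta}(L^p)$. (b) If $0<\theta_1\le\theta_2$ and $1\le p,q<\infty$, then $l^{q),\theta_1}(L^p)\hookrightarrow l^{q),\theta_2}(L^p)$. (c) If $0<\theta_1\le\theta_2$, $1\le p_2<p_1<\infty$ and $1\le q<\infty$, then $l^{q),\theta_1}(L^{p_1})\hookrightarrow l^{q),\theta_2}(L^{p_2})$. (d) If $1\le p<\infty$ and $1\le q<\infty$, then $l^q(L^p)\hookrightarrow l^{q),\theta}(L^p)$. (e) If $1\le p,q<\infty$, $\delta>0$ and $0<\sigma<\frac1{q'}$, where $\frac1q+\frac1{q'}=1$, then $l^{q(1-\sigma)}(L^p)\hookrightarrow l^{q),\theta}(L^p)\hookrightarrow l^{q(1+\delta)}(L^p)$.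
   Context: Let $X$ be one of $\mathbb N,\mathbb N_0,\mathbb Z$ and $I_k=[k,k+1)$ for $k\in X$. For $1\le r<\infty$, $1\le p<\infty$, the amalgam space $l^r(L^p)$ consists of measurable $g$ on $\bigcup_{k\in X}I_k$ with $\|g\|_{l^{r}(L^p)}:=\Big(\sum_{k\in X}\Big(\int_{I_k}|g|^p\,dx\Big)^{r/p}\Big)^{1/r}<\infty$. For $\theta>0$, the grand amalgam Lebesgue function space $l^{q),\theta}(L^p)$ consists of complex-valued measurable $g$ on $\bigcup_{k\in X}I_k$ with $g\chi_{I_k}\in L^p$ for all $k$ and $\|g\|_{p,q),\theta}:=\sup_{\varepsilon>0}\varepsilon^{\frac{\theta}{q(1+\varepsilon)}}\|g\|_{l^{q(1+\varepsilon)}(L^p)}<\infty$. An embedding $A\hookrightarrow B$ means $A\subset B$ and $\|g\|_B\le c\|g\|_A$ for some constant $c>0$ and all $g\in A$. *)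

theory Defs
  imports "HOL-Analysis.Analysis"
begin

definition admissible_index :: "int set \<Rightarrow> bool" where
  "admissible_index X \<longleftrightarrow> X = {1..} \<or> X = {0..} \<or> X = UNIV"

definition unit_int :: "int \<Rightarrow> real set" where
  "unit_int k = {real_of_int k ..< real_of_int k + 1}"

definition amalg_dom :: "int set \<Rightarrow> real set" where
  "amalg_dom X = (\<Union>k\<in>X. unit_int k)"

definition loc_int :: "real \<Rightarrow> (real \<Rightarrow> complex) \<Rightarrow> int \<Rightarrow> ennreal" where
  "loc_int p g k = (\<integral>\<^sup>+ x\<in>unit_int k. ennreal (norm (g x) powr p) \<partial>lebesgue)"

definition loc_norm :: "real \<Rightarrow> (real \<Rightarrow> complex) \<Rightarrow> int \<Rightarrow> real" where
  "loc_norm p g k = enn2real (loc_int p g k) powr (1 / p)"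

definition loc_Lp :: "int set \<Rightarrow> real \<Rightarrow> (real \<Rightarrow> complex) \<Rightarrow> bool" where
  "loc_Lp X p g \<longleftrightarrow> set_borel_measurable lebesgue (amalg_dom X) g
      \<and> (\<forall>k\<in>X. loc_int p g k < \<infinity>)"

definition amalgam :: "int set \<Rightarrow> real \<Rightarrow> real \<Rightarrow> (real \<Rightarrow> complex) set" where
  "amalgam X r p = {g. loc_Lp X p g \<and> (\<lambda>k. loc_norm p g k powr r) summable_on X}"

definition amalgam_norm :: "int set \<Rightarrow> real \<Rightarrow> real \<Rightarrow> (real \<Rightarrow> complex) \<Rightarrow> real" where
  "amalgam_norm X r p g = (\<Sum>\<^sub>\<infinity>k\<in>X. loc_norm p g k powr r) powr (1 / r)"

definition grand_amalgam :: "int set \<Rightarrow> real \<Rightarrow> real \<Rightarrow> real \<Rightarrow> (real \<Rightarrow> complex) set" where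
  "grand_amalgam X q \<theta> p = {g. loc_Lp X p g
      \<and> (\<forall>\<epsilon>>0. g \<in> amalgam X (q * (1 + \<epsilon>)) p)
      \<and> bdd_above ((\<lambda>\<epsilon>. \<epsilon> powr (\<theta> / (q * (1 + \<epsilon>))) * amalgam_norm X (q * (1 + \<epsilon>)) p g) ` {0<..})}"

definition grand_amalgam_norm :: "int set \<Rightarrow> real \<Rightarrow> real \<Rightarrow> real \<Rightarrow> (real \<Rightarrow> complex) \<Rightarrow> real" where
  "grand_amalgam_norm X q \<theta> p g =
     (SUP \<epsilon>\<in>{0<..}. \<epsilon> powr (\<theta> / (q * (1 + \<epsilon>))) * amalgam_norm X (q * (1 + \<epsilon>)) p g)"

definition embeds :: "'a set \<Rightarrow> ('a \<Rightarrow> real) \<Rightarrow> 'a set \<Rightarrow> ('a \<Rightarrow> real) \<Rightarrow> bool" where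
  "embeds A nA B nB \<longleftrightarrow> A \<subseteq> B \<and> (\<exists>c>0. \<forall>g\<in>A. nB g \<le> c * nA g)"

end

theory Submission
  imports Defs
begin

text \<open>
Three elementary comparisons give all five embeddings.
For sequences, ||a||_s <= ||a||_r when 0 < r <= s: after normalising ||a||_r = 1 every
|a_k| <= 1, hence |a_k|^s <= |a_k|^r.
On a set of measure at most one, ||g||_(p2) <= ||g||_(p1) when p2 < p1: integrate a tangent line
of the concave map u |-> u^(p2/p1), taken at the point u = integral of |g|^(p1).
The weights are bounded uniformly, eps^(c/(q(1+eps))) <= e^(c/q), because ln eps / (1 + eps) <= 1.
For (a) one substitutes q1 (1 + eta) = q2 (1 + eps): the eps-th term of the l^(q2),theta) norm
then involves the same sequence norm as the eta-th term of the l^(q1),q1 theta/q2) norm, and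
eta >= eps makes the two weights comparable.
Nothing depends on the shape of the index set, so admissible_index X is never used.
\<close>

lemma embedsI:
  assumes "c > 0" and "\<And>g. g \<in> A \<Longrightarrow> g \<in> B \<and> nB g \<le> c * nA g"
  shows "embeds A nA B nB"
  using assms unfolding embeds_def by blast

lemma infsum_powr_root_antimono_exponent:
  fixes a :: "'a \<Rightarrow> real"
  assumes nonneg: "\<And>k. k \<in> X \<Longrightarrow> 0 \<le> a k" and r: "0 < r" "r \<le> s"
    and summable: "(\<lambda>k. a k powr r) summable_on X"
  shows "(\<lambda>k. a k powr s) summable_on X \<and>
    (\<Sum>\<^sub>\<infinity>k\<in>X. a k powr s) powr (1 / s) \<le> (\<Sum>\<^sub>\<infinity>k\<in>X. a k powr r) powr (1 / r)"
proof -
  define N where "N = (\<Sum>\<^sub>\<infinity>k\<in>X. a k powr r) powr (1 / r)"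
  have N0: "0 \<le> N" by (simp add: N_def)
  have sum_r: "(\<Sum>\<^sub>\<infinity>k\<in>X. a k powr r) = N powr r"
    using r by (simp add: N_def powr_powr infsum_nonneg)
  have a_le_N: "a k \<le> N" if k: "k \<in> X" for k
  proof -
    have "a k powr r \<le> N powr r"
      using finite_sum_le_infsum[OF summable, of "{k}"] k nonneg by (simp add: sum_r)
    then have "(a k powr r) powr (1 / r) \<le> (N powr r) powr (1 / r)"
      by (intro powr_mono2[of "1 / r"]) (use r in auto)
    then show ?thesis
      using nonneg[OF k] r N0 by (simp add: powr_powr)
  qed
  have bound: "a k powr s \<le> N powr (s - r) * a k powr r" if k: "k \<in> X" for k
  proof -
    have "a k powr s = a k powr (s - r) * a k powr r" by (simp flip: powr_add)
    also have "\<dots> \<le> N powr (s - r) * a k powr r"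
      by (intro mult_right_mono powr_mono2) (use r nonneg[OF k] a_le_N[OF k] in auto)
    finally show ?thesis .
  qed
  have summable_bound: "(\<lambda>k. N powr (s - r) * a k powr r) summable_on X"
    using summable by (rule summable_on_cmult_right)
  have summable_s: "(\<lambda>k. a k powr s) summable_on X"
    by (rule summable_on_comparison_test[OF summable_bound]) (use bound in auto)
  have "(\<Sum>\<^sub>\<infinity>k\<in>X. a k powr s) \<le> (\<Sum>\<^sub>\<infinity>k\<in>X. N powr (s - r) * a k powr r)"
    by (rule infsum_mono[OF summable_s summable_bound]) (use bound in auto)
  also have "\<dots> = N powr s"
    by (simp add: infsum_cmult_right[OF summable] sum_r flip: powr_add)
  finally have "(\<Sum>\<^sub>\<infinity>k\<in>X. a k powr s) powr (1 / s) \<le> (N powr s) powr (1 / s)"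
    by (intro powr_mono2) (use r in \<open>auto intro!: infsum_nonneg\<close>)
  also have "\<dots> = N" using r N0 by (simp add: powr_powr)
  finally show ?thesis using summable_s by (simp add: N_def)
qed

lemma infsum_powr_root_mono:
  fixes a b :: "'a \<Rightarrow> real"
  assumes le: "\<And>k. k \<in> X \<Longrightarrow> 0 \<le> a k" "\<And>k. k \<in> X \<Longrightarrow> a k \<le> b k" and r: "0 < r"
    and summable: "(\<lambda>k. b k powr r) summable_on X"
  shows "(\<lambda>k. a k powr r) summable_on X \<and>
    (\<Sum>\<^sub>\<infinity>k\<in>X. a k powr r) powr (1 / r) \<le> (\<Sum>\<^sub>\<infinity>k\<in>X. b k powr r) powr (1 / r)"
proof -
  have powr_le: "a k powr r \<le> b k powr r" if "k \<in> X" for k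
    by (intro powr_mono2) (use r le that in auto)
  have summable_a: "(\<lambda>k. a k powr r) summable_on X"
    by (rule summable_on_comparison_test[OF summable]) (use powr_le in auto)
  have "(\<Sum>\<^sub>\<infinity>k\<in>X. a k powr r) \<le> (\<Sum>\<^sub>\<infinity>k\<in>X. b k powr r)"
    by (rule infsum_mono[OF summable_a summable]) (use powr_le in auto)
  then show ?thesis
    using summable_a r by (auto intro!: powr_mono2 infsum_nonneg)
qed

lemma powr_le_tangent_line:
  fixes u l t :: real
  assumes "0 \<le> u" "0 < l" "0 < t" "t < 1"
  shows "u powr t \<le> t * l powr (t - 1) * u + (1 - t) * l powr t"
proof (cases "u = 0")
  case True
  then show ?thesis using assms by simp
next
  case False
  have "(u / l) powr t * 1 powr (1 - t) \<le> t * (u / l) + (1 - t) * 1"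
    by (rule Youngs_inequality_0) (use assms False in auto)
  then have "l powr t * (u / l) powr t \<le> l powr t * (t * (u / l) + (1 - t))"
    by (intro mult_left_mono) auto
  moreover have "l powr t * (u / l) powr t = u powr t"
    using assms by (simp add: powr_divide)
  moreover have "l powr t * (t * (u / l) + (1 - t)) = t * l powr (t - 1) * u + (1 - t) * l powr t"
    using assms by (simp add: powr_diff field_simps)
  ultimately show ?thesis by simp
qed

lemma nn_integral_powr_le_powr_nn_integral:
  fixes f :: "'a \<Rightarrow> real"
  assumes f: "f \<in> borel_measurable M" "\<And>x. 0 \<le> f x"
    and M: "emeasure M (space M) \<le> 1" and t: "0 < t" "t < 1"
    and fin: "(\<integral>\<^sup>+x. ennreal (f x) \<partial>M) < \<infinity>"
  shows "(\<integral>\<^sup>+x. ennreal (f x powr t) \<partial>M) \<le> ennreal (enn2real (\<integral>\<^sup>+x. ennreal (f x) \<partial>M) powr t)"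
proof -
  define a where "a = enn2real (\<integral>\<^sup>+x. ennreal (f x) \<partial>M)"
  have int_f: "(\<integral>\<^sup>+x. ennreal (f x) \<partial>M) = ennreal a" and a0: "0 \<le> a"
    using fin by (auto simp: a_def)
  have tangent: "(\<integral>\<^sup>+x. ennreal (f x powr t) \<partial>M)
      \<le> ennreal (t * l powr (t - 1) * a + (1 - t) * l powr t)" if l: "l > 0" for l
  proof -
    have "(\<integral>\<^sup>+x. ennreal (f x powr t) \<partial>M)
        \<le> (\<integral>\<^sup>+x. ennreal (t * l powr (t - 1)) * ennreal (f x) + ennreal ((1 - t) * l powr t) \<partial>M)"
    proof (rule nn_integral_mono)
      fix x
      have "ennreal (f x powr t) \<le> ennreal (t * l powr (t - 1) * f x + (1 - t) * l powr t)"
        using powr_le_tangent_line[OF f(2) l t] by (rule ennreal_leI)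
      also have "\<dots> = ennreal (t * l powr (t - 1)) * ennreal (f x) + ennreal ((1 - t) * l powr t)"
        using t l f(2)[of x] by (simp add: ennreal_mult)
      finally show "ennreal (f x powr t)
          \<le> ennreal (t * l powr (t - 1)) * ennreal (f x) + ennreal ((1 - t) * l powr t)" .
    qed
    also have "\<dots> = ennreal (t * l powr (t - 1)) * ennreal a + ennreal ((1 - t) * l powr t) * emeasure M (space M)"
      using f by (simp add: nn_integral_add nn_integral_cmult int_f)
    also have "\<dots> \<le> ennreal (t * l powr (t - 1)) * ennreal a + ennreal ((1 - t) * l powr t)"
      using M by (intro add_left_mono) (simp add: mult_left_le)
    also have "\<dots> = ennreal (t * l powr (t - 1) * a + (1 - t) * l powr t)"
      using t l a0 by (simp flip: ennreal_mult ennreal_plus)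
    finally show ?thesis .
  qed
  show ?thesis
  proof (cases "a = 0")
    case True
    then have "AE x in M. ennreal (f x) = 0"
      using int_f f by (subst nn_integral_0_iff_AE[symmetric]) auto
    then have "(\<integral>\<^sup>+x. ennreal (f x powr t) \<partial>M) = 0"
      using f by (subst nn_integral_0_iff_AE) auto
    then show ?thesis by simp
  next
    case False
    then have "a > 0" using a0 by simp
    then have "t * a powr (t - 1) * a + (1 - t) * a powr t = a powr t"
      by (simp add: powr_diff field_simps)
    then show ?thesis using tangent[OF \<open>a > 0\<close>] by (simp add: a_def)
  qed
qed

lemma nn_integral_norm_powr_root_mono:
  fixes g :: "'a \<Rightarrow> 'b::real_normed_vector"
  assumes g: "g \<in> borel_measurable M" and M: "emeasure M (space M) \<le> 1"
    and p: "0 < p2" "p2 < p1" and fin: "(\<integral>\<^sup>+x. ennreal (norm (g x) powr p1) \<partial>M) < \<infinity>"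
  shows "(\<integral>\<^sup>+x. ennreal (norm (g x) powr p2) \<partial>M) < \<infinity> \<and>
    enn2real (\<integral>\<^sup>+x. ennreal (norm (g x) powr p2) \<partial>M) powr (1 / p2)
      \<le> enn2real (\<integral>\<^sup>+x. ennreal (norm (g x) powr p1) \<partial>M) powr (1 / p1)"
proof -
  define a where "a = enn2real (\<integral>\<^sup>+x. ennreal (norm (g x) powr p1) \<partial>M)"
  define b where "b = enn2real (\<integral>\<^sup>+x. ennreal (norm (g x) powr p2) \<partial>M)"
  have "norm (g x) powr p2 = (norm (g x) powr p1) powr (p2 / p1)" for x
    using p by (simp add: powr_powr)
  then have le: "(\<integral>\<^sup>+x. ennreal (norm (g x) powr p2) \<partial>M) \<le> ennreal (a powr (p2 / p1))"
    unfolding a_def using nn_integral_powr_le_powr_nn_integral[of "\<lambda>x. norm (g x) powr p1" M "p2 / p1"]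
      g M p fin by simp
  then have fin2: "(\<integral>\<^sup>+x. ennreal (norm (g x) powr p2) \<partial>M) < \<infinity>"
    using le_less_trans by fastforce
  have "b \<le> a powr (p2 / p1)"
    unfolding b_def using le fin2 by (intro enn2real_leI) auto
  then have "b powr (1 / p2) \<le> (a powr (p2 / p1)) powr (1 / p2)"
    using p by (intro powr_mono2) (auto simp: b_def)
  also have "\<dots> = a powr (1 / p1)"
    using p by (simp add: powr_powr a_def)
  finally show ?thesis using fin2 by (simp add: a_def b_def)
qed

lemma loc_norm_antimono_exponent:
  assumes g: "loc_Lp X p1 g" and p: "0 < p2" "p2 < p1"
  shows "loc_Lp X p2 g \<and> (\<forall>k\<in>X. loc_norm p2 g k \<le> loc_norm p1 g k)"
proof -
  have local: "loc_int p2 g k < \<infinity> \<and> loc_norm p2 g k \<le> loc_norm p1 g k" if k: "k \<in> X" for k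
  proof -
    define M where "M = restrict_space lebesgue (unit_int k)"
    have I: "unit_int k \<in> sets lebesgue" by (simp add: unit_int_def)
    have loc_int_M: "loc_int p g k = (\<integral>\<^sup>+x. ennreal (norm (g x) powr p) \<partial>M)" for p
      using I by (simp add: loc_int_def M_def nn_integral_restrict_space)
    have "unit_int k \<subseteq> amalg_dom X" using k by (auto simp: amalg_dom_def)
    then have "set_borel_measurable lebesgue (unit_int k) g"
      using set_borel_measurable_subset[OF _ I] g unfolding loc_Lp_def by blast
    then have "g \<in> borel_measurable M"
      using I by (simp add: M_def set_borel_measurable_def borel_measurable_restrict_space_iff)
    moreover have "emeasure M (space M) = 1"
      using I by (simp add: M_def emeasure_restrict_space space_restrict_space unit_int_def
          emeasure_completion)
    moreover have "loc_int p1 g k < \<infinity>" using g k by (simp add: loc_Lp_def)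
    ultimately show ?thesis
      using nn_integral_norm_powr_root_mono[of g M p2 p1] p
      by (simp add: loc_norm_def loc_int_M)
  qed
  then show ?thesis using g by (auto simp: loc_Lp_def)
qed

lemma amalgam_norm_nonneg: "0 \<le> amalgam_norm X r p g"
  by (simp add: amalgam_norm_def)

lemma amalgam_antimono_exponent:
  assumes "g \<in> amalgam X r p" "0 < r" "r \<le> s"
  shows "g \<in> amalgam X s p \<and> amalgam_norm X s p g \<le> amalgam_norm X r p g"
  using infsum_powr_root_antimono_exponent[of X "loc_norm p g" r s] assms
  by (auto simp: amalgam_def amalgam_norm_def loc_norm_def)

lemma amalgam_antimono_local_exponent:
  assumes g: "g \<in> amalgam X r p1" and p: "0 < p2" "p2 \<le> p1" and r: "0 < r"
  shows "g \<in> amalgam X r p2 \<and> amalgam_norm X r p2 g \<le> amalgam_norm X r p1 g"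
proof (cases "p2 = p1")
  case False
  then have "loc_Lp X p2 g \<and> (\<forall>k\<in>X. loc_norm p2 g k \<le> loc_norm p1 g k)"
    using loc_norm_antimono_exponent[of X p1 g p2] g p by (simp add: amalgam_def)
  then show ?thesis
    using infsum_powr_root_mono[of X "loc_norm p2 g" "loc_norm p1 g" r] g r
    by (auto simp: amalgam_def amalgam_norm_def loc_norm_def)
qed (use g in simp)

lemma grand_amalgam_weighted_norm_le:
  assumes "g \<in> grand_amalgam X q \<theta> p" "\<epsilon> > 0"
  shows "\<epsilon> powr (\<theta> / (q * (1 + \<epsilon>))) * amalgam_norm X (q * (1 + \<epsilon>)) p g
    \<le> grand_amalgam_norm X q \<theta> p g"
  unfolding grand_amalgam_norm_def
  by (rule cSUP_upper[where f = "\<lambda>\<epsilon>. \<epsilon> powr (\<theta> / (q * (1 + \<epsilon>))) * amalgam_norm X (q * (1 + \<epsilon>)) p g"])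
    (use assms in \<open>auto simp: grand_amalgam_def\<close>)

lemma grand_amalgamI_norm_le:
  assumes "loc_Lp X p g"
    and "\<And>\<epsilon>. \<epsilon> > 0 \<Longrightarrow> g \<in> amalgam X (q * (1 + \<epsilon>)) p"
    and bound: "\<And>\<epsilon>. \<epsilon> > 0 \<Longrightarrow> \<epsilon> powr (\<theta> / (q * (1 + \<epsilon>))) * amalgam_norm X (q * (1 + \<epsilon>)) p g \<le> C"
  shows "g \<in> grand_amalgam X q \<theta> p \<and> grand_amalgam_norm X q \<theta> p g \<le> C"
proof
  show "g \<in> grand_amalgam X q \<theta> p"
    using assms by (auto simp: grand_amalgam_def intro!: bdd_aboveI2)
  show "grand_amalgam_norm X q \<theta> p g \<le> C"
    unfolding grand_amalgam_norm_def by (rule cSUP_least) (use bound in auto)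
qed

lemma powr_weight_le_exp:
  fixes \<epsilon> c q :: real
  assumes "\<epsilon> > 0" "c \<ge> 0" "q > 0"
  shows "\<epsilon> powr (c / (q * (1 + \<epsilon>))) \<le> exp (c / q)"
proof -
  have "ln \<epsilon> / (1 + \<epsilon>) \<le> 1"
    using assms ln_le_minus_one[of \<epsilon>] by (simp add: divide_le_eq)
  then have "c / q * (ln \<epsilon> / (1 + \<epsilon>)) \<le> c / q * 1"
    using assms by (intro mult_left_mono) auto
  then have "c / (q * (1 + \<epsilon>)) * ln \<epsilon> \<le> c / q"
    by (simp add: field_simps)
  then show ?thesis using assms by (simp add: powr_def)
qed

lemma powr_weight_reparametrize_le:
  fixes \<epsilon> \<eta> q1 q2 \<theta> :: real
  assumes \<epsilon>: "\<epsilon> > 0" and q: "0 < q1" "q1 < q2" and \<theta>: "0 \<le> \<theta>"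
    and \<eta>: "q1 * (1 + \<eta>) = q2 * (1 + \<epsilon>)"
  shows "\<epsilon> powr (\<theta> / (q2 * (1 + \<epsilon>))) \<le> exp (\<theta> / q2) * \<eta> powr ((q1 / q2 * \<theta>) / (q1 * (1 + \<eta>)))"
proof -
  define s where "s = \<theta> / (q2 * (1 + \<epsilon>))"
  have s: "0 \<le> s" using assms by (simp add: s_def)
  have exponent: "(q1 / q2 * \<theta>) / (q1 * (1 + \<eta>)) = q1 / q2 * s"
    unfolding \<eta> s_def by simp
  have "q1 / q2 * s \<le> s" using q s by (intro mult_left_le_one_le) auto
  have "q1 * (1 + \<epsilon>) \<le> q1 * (1 + \<eta>)"
    unfolding \<eta> using q \<epsilon> by (intro mult_right_mono) auto
  then have "\<epsilon> \<le> \<eta>" using q by simp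
  have "1 \<le> exp (\<theta> / q2)" using \<theta> q by simp
  show ?thesis
    unfolding exponent s_def[symmetric]
  proof (cases "\<epsilon> \<le> 1")
    case True
    have "\<epsilon> powr s \<le> \<epsilon> powr (q1 / q2 * s)"
      by (rule powr_mono') (use \<open>q1 / q2 * s \<le> s\<close> \<epsilon> True in auto)
    also have "\<dots> \<le> \<eta> powr (q1 / q2 * s)"
      by (rule powr_mono2) (use q s \<epsilon> \<open>\<epsilon> \<le> \<eta>\<close> in auto)
    also have "\<dots> \<le> exp (\<theta> / q2) * \<eta> powr (q1 / q2 * s)"
      using \<open>1 \<le> exp (\<theta> / q2)\<close> by (simp add: mult_le_cancel_right1)
    finally show "\<epsilon> powr s \<le> exp (\<theta> / q2) * \<eta> powr (q1 / q2 * s)" .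
  next
    case False
    have "\<epsilon> powr s \<le> exp (\<theta> / q2)"
      unfolding s_def by (rule powr_weight_le_exp) (use \<epsilon> \<theta> q in auto)
    also have "\<dots> \<le> exp (\<theta> / q2) * \<eta> powr (q1 / q2 * s)"
      using ge_one_powr_ge_zero[of \<eta> "q1 / q2 * s"] False \<open>\<epsilon> \<le> \<eta>\<close> q s by simp
    finally show "\<epsilon> powr s \<le> exp (\<theta> / q2) * \<eta> powr (q1 / q2 * s)" .
  qed
qed

lemma amalgam_embeds_grand_amalgam:
  assumes r: "0 < r" "r \<le> q" and \<theta>: "0 \<le> \<theta>"
  shows "embeds (amalgam X r p) (amalgam_norm X r p) (grand_amalgam X q \<theta> p) (grand_amalgam_norm X q \<theta> p)"
proof (rule embedsI)
  fix g assume g: "g \<in> amalgam X r p"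
  have larger: "g \<in> amalgam X (q * (1 + \<epsilon>)) p \<and> amalgam_norm X (q * (1 + \<epsilon>)) p g \<le> amalgam_norm X r p g"
    if "\<epsilon> > 0" for \<epsilon>
  proof (rule amalgam_antimono_exponent[OF g r(1)])
    have "q \<le> q * (1 + \<epsilon>)" using r that by (simp add: ring_distribs)
    then show "r \<le> q * (1 + \<epsilon>)" using r by linarith
  qed
  have "\<epsilon> powr (\<theta> / (q * (1 + \<epsilon>))) * amalgam_norm X (q * (1 + \<epsilon>)) p g \<le> exp (\<theta> / q) * amalgam_norm X r p g"
    if "\<epsilon> > 0" for \<epsilon>
    using larger[OF that] powr_weight_le_exp[OF that \<theta>, of q] r
    by (intro mult_mono) (auto simp: amalgam_norm_nonneg)
  then show "g \<in> grand_amalgam X q \<theta> p \<and> grand_amalgam_norm X q \<theta> p g \<le> exp (\<theta> / q) * amalgam_norm X r p g"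
    using g larger by (intro grand_amalgamI_norm_le) (auto simp: amalgam_def)
qed simp

lemma grand_amalgam_embeds_amalgam:
  assumes \<delta>: "\<delta> > 0"
  shows "embeds (grand_amalgam X q \<theta> p) (grand_amalgam_norm X q \<theta> p)
    (amalgam X (q * (1 + \<delta>)) p) (amalgam_norm X (q * (1 + \<delta>)) p)"
proof (rule embedsI)
  fix g assume g: "g \<in> grand_amalgam X q \<theta> p"
  have "amalgam_norm X (q * (1 + \<delta>)) p g
      = \<delta> powr (- (\<theta> / (q * (1 + \<delta>)))) * (\<delta> powr (\<theta> / (q * (1 + \<delta>))) * amalgam_norm X (q * (1 + \<delta>)) p g)"
    using \<delta> by (simp add: powr_minus)
  also have "\<dots> \<le> \<delta> powr (- (\<theta> / (q * (1 + \<delta>)))) * grand_amalgam_norm X q \<theta> p g"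
    using grand_amalgam_weighted_norm_le[OF g \<delta>] by (simp add: mult_left_mono)
  finally show "g \<in> amalgam X (q * (1 + \<delta>)) p \<and>
      amalgam_norm X (q * (1 + \<delta>)) p g \<le> \<delta> powr (- (\<theta> / (q * (1 + \<delta>)))) * grand_amalgam_norm X q \<theta> p g"
    using g \<delta> by (simp add: grand_amalgam_def)
qed (use \<delta> in simp)

lemma grand_amalgam_embeds_grand_amalgam_local:
  assumes \<theta>: "\<theta>1 \<le> \<theta>2" and p: "0 < p2" "p2 \<le> p1" and q: "0 < q"
  shows "embeds (grand_amalgam X q \<theta>1 p1) (grand_amalgam_norm X q \<theta>1 p1)
    (grand_amalgam X q \<theta>2 p2) (grand_amalgam_norm X q \<theta>2 p2)"
proof (rule embedsI)
  fix g assume g: "g \<in> grand_amalgam X q \<theta>1 p1"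
  define C where "C = exp ((\<theta>2 - \<theta>1) / q)"
  have smaller_p: "g \<in> amalgam X (q * (1 + \<epsilon>)) p2 \<and>
      amalgam_norm X (q * (1 + \<epsilon>)) p2 g \<le> amalgam_norm X (q * (1 + \<epsilon>)) p1 g" if "\<epsilon> > 0" for \<epsilon>
    using g that q p by (intro amalgam_antimono_local_exponent) (auto simp: grand_amalgam_def)
  have "\<epsilon> powr (\<theta>2 / (q * (1 + \<epsilon>))) * amalgam_norm X (q * (1 + \<epsilon>)) p2 g
      \<le> C * grand_amalgam_norm X q \<theta>1 p1 g" if \<epsilon>: "\<epsilon> > 0" for \<epsilon>
  proof -
    have "\<epsilon> powr (\<theta>2 / (q * (1 + \<epsilon>)))
        = \<epsilon> powr ((\<theta>2 - \<theta>1) / (q * (1 + \<epsilon>))) * \<epsilon> powr (\<theta>1 / (q * (1 + \<epsilon>)))"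
      by (simp add: diff_divide_distrib flip: powr_add)
    also have "\<dots> \<le> C * \<epsilon> powr (\<theta>1 / (q * (1 + \<epsilon>)))"
      unfolding C_def by (intro mult_right_mono powr_weight_le_exp) (use \<epsilon> \<theta> q in auto)
    finally have "\<epsilon> powr (\<theta>2 / (q * (1 + \<epsilon>))) * amalgam_norm X (q * (1 + \<epsilon>)) p2 g
        \<le> (C * \<epsilon> powr (\<theta>1 / (q * (1 + \<epsilon>)))) * amalgam_norm X (q * (1 + \<epsilon>)) p1 g"
      using smaller_p[OF \<epsilon>] by (intro mult_mono) (auto simp: C_def amalgam_norm_nonneg)
    also have "\<dots> \<le> C * grand_amalgam_norm X q \<theta>1 p1 g"
      unfolding mult.assoc using grand_amalgam_weighted_norm_le[OF g \<epsilon>]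
      by (rule mult_left_mono) (simp add: C_def)
    finally show ?thesis .
  qed
  moreover have "loc_Lp X p2 g"
    using g loc_norm_antimono_exponent[of X p1 g p2] p
    by (cases "p2 = p1") (auto simp: grand_amalgam_def)
  ultimately show "g \<in> grand_amalgam X q \<theta>2 p2 \<and> grand_amalgam_norm X q \<theta>2 p2 g \<le> C * grand_amalgam_norm X q \<theta>1 p1 g"
    using smaller_p by (intro grand_amalgamI_norm_le) auto
qed simp

lemma grand_amalgam_embeds_grand_amalgam_exponent:
  assumes q: "0 < q1" "q1 < q2" and \<theta>: "0 \<le> \<theta>"
  shows "embeds (grand_amalgam X q1 (q1 / q2 * \<theta>) p) (grand_amalgam_norm X q1 (q1 / q2 * \<theta>) p)
    (grand_amalgam X q2 \<theta> p) (grand_amalgam_norm X q2 \<theta> p)"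
proof (rule embedsI)
  fix g assume g: "g \<in> grand_amalgam X q1 (q1 / q2 * \<theta>) p"
  define \<eta> where "\<eta> \<epsilon> = q2 * (1 + \<epsilon>) / q1 - 1" for \<epsilon> :: real
  have \<eta>: "q1 * (1 + \<eta> \<epsilon>) = q2 * (1 + \<epsilon>)" for \<epsilon>
    using q by (simp add: \<eta>_def field_simps)
  have \<eta>_pos: "\<eta> \<epsilon> > 0" if "\<epsilon> > 0" for \<epsilon>
    using q that mult_strict_mono[of q1 q2 1 "1 + \<epsilon>"] by (simp add: \<eta>_def field_simps)
  have member: "g \<in> amalgam X (q2 * (1 + \<epsilon>)) p" if "\<epsilon> > 0" for \<epsilon>
    using g \<eta>_pos[OF that] unfolding grand_amalgam_def by (auto simp flip: \<eta>)
  have "\<epsilon> powr (\<theta> / (q2 * (1 + \<epsilon>))) * amalgam_norm X (q2 * (1 + \<epsilon>)) p g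
      \<le> exp (\<theta> / q2) * grand_amalgam_norm X q1 (q1 / q2 * \<theta>) p g" if \<epsilon>: "\<epsilon> > 0" for \<epsilon>
  proof -
    have "\<epsilon> powr (\<theta> / (q2 * (1 + \<epsilon>))) * amalgam_norm X (q2 * (1 + \<epsilon>)) p g
        \<le> exp (\<theta> / q2) * (\<eta> \<epsilon> powr ((q1 / q2 * \<theta>) / (q1 * (1 + \<eta> \<epsilon>)))
            * amalgam_norm X (q1 * (1 + \<eta> \<epsilon>)) p g)"
      using powr_weight_reparametrize_le[OF \<epsilon> q \<theta> \<eta>] unfolding mult.assoc[symmetric] \<eta>
      by (intro mult_right_mono amalgam_norm_nonneg)
    also have "\<dots> \<le> exp (\<theta> / q2) * grand_amalgam_norm X q1 (q1 / q2 * \<theta>) p g"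
      using grand_amalgam_weighted_norm_le[OF g \<eta>_pos[OF \<epsilon>]] by simp
    finally show ?thesis .
  qed
  then show "g \<in> grand_amalgam X q2 \<theta> p \<and>
      grand_amalgam_norm X q2 \<theta> p g \<le> exp (\<theta> / q2) * grand_amalgam_norm X q1 (q1 / q2 * \<theta>) p g"
    using g member by (intro grand_amalgamI_norm_le) (auto simp: grand_amalgam_def)
qed simp

theorem theorem2p8:
  fixes X :: "int set" and \<theta> :: real
  assumes "admissible_index X" and "\<theta> > 0"
  shows
   "(\<forall>q1 q2 p. 1 \<le> q1 \<and> q1 < q2 \<and> 1 \<le> p \<longrightarrow>
       embeds (grand_amalgam X q1 (q1 / q2 * \<theta>) p) (grand_amalgam_norm X q1 (q1 / q2 * \<theta>) p)
              (grand_amalgam X q2 \<theta> p) (grand_amalgam_norm X q2 \<theta> p))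
  \<and> (\<forall>\<theta>1 \<theta>2 p q. 0 < \<theta>1 \<and> \<theta>1 \<le> \<theta>2 \<and> 1 \<le> p \<and> 1 \<le> q \<longrightarrow>
       embeds (grand_amalgam X q \<theta>1 p) (grand_amalgam_norm X q \<theta>1 p)
              (grand_amalgam X q \<theta>2 p) (grand_amalgam_norm X q \<theta>2 p))
  \<and> (\<forall>\<theta>1 \<theta>2 p1 p2 q. 0 < \<theta>1 \<and> \<theta>1 \<le> \<theta>2 \<and> 1 \<le> p2 \<and> p2 < p1 \<and> 1 \<le> q \<longrightarrow>
       embeds (grand_amalgam X q \<theta>1 p1) (grand_amalgam_norm X q \<theta>1 p1)
              (grand_amalgam X q \<theta>2 p2) (grand_amalgam_norm X q \<theta>2 p2))
  \<and> (\<forall>p q. 1 \<le> p \<and> 1 \<le> q \<longrightarrow>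
       embeds (amalgam X q p) (amalgam_norm X q p)
              (grand_amalgam X q \<theta> p) (grand_amalgam_norm X q \<theta> p))
  \<and> (\<forall>p q \<delta> \<sigma>. 1 \<le> p \<and> 1 \<le> q \<and> \<delta> > 0 \<and> 0 < \<sigma> \<and> \<sigma> < 1 - 1 / q \<longrightarrow>
       embeds (amalgam X (q * (1 - \<sigma>)) p) (amalgam_norm X (q * (1 - \<sigma>)) p)
              (grand_amalgam X q \<theta> p) (grand_amalgam_norm X q \<theta> p)
     \<and> embeds (grand_amalgam X q \<theta> p) (grand_amalgam_norm X q \<theta> p)
              (amalgam X (q * (1 + \<delta>)) p) (amalgam_norm X (q * (1 + \<delta>)) p))"
  apply (intro conjI allI impI)
  subgoal premises h
    by (rule grand_amalgam_embeds_grand_amalgam_exponent) (use h assms(2) in auto)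
  subgoal using assms(2) by (auto intro: grand_amalgam_embeds_grand_amalgam_local)
  subgoal using assms(2) by (auto intro: grand_amalgam_embeds_grand_amalgam_local)
  subgoal using assms(2) by (auto intro: amalgam_embeds_grand_amalgam)
  subgoal premises h for p q \<delta> \<sigma>
  proof -
    have "0 < 1 / q" using h by simp
    then have "\<sigma> < 1" using h by linarith
    then have "0 < q * (1 - \<sigma>)" "q * (1 - \<sigma>) \<le> q" using h by auto
    then show ?thesis by (rule amalgam_embeds_grand_amalgam) (use assms(2) in simp)
  qed
  subgoal using assms(2) by (auto intro: grand_amalgam_embeds_amalgam)
  done

end
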